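(* Let $A$ be a non-symmetric haploid commutative $\Delta$-separable special Frobenius algebra in $\mathcal{C}$, with Nakayama automorphism $N_A$. Then $\mu\circ(N_A\otimes\mathrm{id}_A)\circ\Delta=0$.
   Context: Standing assumptions: $k$ is a field with $\mathrm{char}(k)\neq 2$. $\mathcal{C}$ is a $k$-linear additive idempotent-complete ribbon category, strict as a monoidal category, with bilinear tensor product and absolutely simple tensor unit ($\mathrm{End}_{\mathcal{C}}(1)=k\,\mathrm{id}_1$), with braiding $c$ and twist $\theta$. A Frobenius algebra $(A,\mu,\eta,\Delta,\epsilon)$ is an algebra and coalgebra with $(\mathrm{id}\otimes\mu)(\Delta\otimes\mathrm{id})=\Delta\mu=(\mu\otimes\mathrm{id})(\mathrm{id}\otimes\Delta)$. It is commutative if $\mu\circ c_{A,A}=\mu$; $\Delta$-separable if $\mu\circ\Delta=\mathrm{id}_A$; special if $\epsilon\circ\eta\in k^\times\mathrm{id}_1$ and $\mu\circ\Delta\in k^\times\mathrm{id}_A$; haploid if $\dim_k\mathrm{Hom}(1,A)=1$. The Nakayama automorphism is $N_A=\Phi_1^{-1}\circ\Phi_2$, where with $\kappa=\epsilon\circ\mu$, $\Phi_1=(\kappa\otimes\mathrm{id}_{A^*})(\mathrm{id}_A\otimes\mathrm{coev}_A)$ and $\Phi_2=(\mathrm{id}_{A^*}\otimes\kappa)(\widetilde{\mathrm{coev}}_A\otimes\mathrm{id}_A)$ are the isomorphisms $A\to A^*$ given by the Frobenius pairing and the two coevaluations of the pivotal structure; $A$ is symmetric if $N_A=\mathrm{id}_A$.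 *)

theory Defs
  imports Main
begin

text \<open>
  A k-linear strict monoidal category with braiding, twist and (left) duals, encoded by
  its operations.  Objects form the type 'o, morphisms the type 'm (every element of 'm is
  a morphism with a domain and codomain), scalars the field 'k.
  Comp C g f is the composite g after f (meaningful when Cod f = Dom g).
  Ev X : X* (x) X -> 1 and Coev X : 1 -> X (x) X* (left duality).
\<close>

record ('o, 'm, 'k) rcat =
  Dom   :: "'m \<Rightarrow> 'o"
  Cod   :: "'m \<Rightarrow> 'o"
  Id    :: "'o \<Rightarrow> 'm"
  Comp  :: "'m \<Rightarrow> 'm \<Rightarrow> 'm"
  Add   :: "'m \<Rightarrow> 'm \<Rightarrow> 'm"
  Smult :: "'k \<Rightarrow> 'm \<Rightarrow> 'm"
  Zero  :: "'o \<Rightarrow> 'o \<Rightarrow> 'm"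
  Tens  :: "'o \<Rightarrow> 'o \<Rightarrow> 'o"
  TensM :: "'m \<Rightarrow> 'm \<Rightarrow> 'm"
  Unit  :: "'o"
  Braid :: "'o \<Rightarrow> 'o \<Rightarrow> 'm"
  Twist :: "'o \<Rightarrow> 'm"
  Dual  :: "'o \<Rightarrow> 'o"
  Ev    :: "'o \<Rightarrow> 'm"
  Coev  :: "'o \<Rightarrow> 'm"

definition hom :: "('o, 'm, 'k, 'z) rcat_scheme \<Rightarrow> 'o \<Rightarrow> 'o \<Rightarrow> 'm set" where
  "hom C X Y = {f. Dom C f = X \<and> Cod C f = Y}"

definition is_iso :: "('o, 'm, 'k, 'z) rcat_scheme \<Rightarrow> 'm \<Rightarrow> bool" where
  "is_iso C f \<longleftrightarrow> (\<exists>g \<in> hom C (Cod C f) (Dom C f).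
      Comp C g f = Id C (Dom C f) \<and> Comp C f g = Id C (Cod C f))"

definition category_ax :: "('o, 'm, 'k, 'z) rcat_scheme \<Rightarrow> bool" where
  "category_ax C \<longleftrightarrow>
     (\<forall>X. Id C X \<in> hom C X X)
   \<and> (\<forall>f g. Cod C f = Dom C g \<longrightarrow> Comp C g f \<in> hom C (Dom C f) (Cod C g))
   \<and> (\<forall>f. Comp C f (Id C (Dom C f)) = f \<and> Comp C (Id C (Cod C f)) f = f)
   \<and> (\<forall>f g h. Cod C f = Dom C g \<longrightarrow> Cod C g = Dom C h \<longrightarrow>
        Comp C h (Comp C g f) = Comp C (Comp C h g) f)"

definition klinear_ax :: "('o, 'm, 'k::field, 'z) rcat_scheme \<Rightarrow> bool" where
  "klinear_ax C \<longleftrightarrow>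
     (\<forall>X Y. Zero C X Y \<in> hom C X Y)
   \<and> (\<forall>X Y. \<forall>f \<in> hom C X Y. \<forall>g \<in> hom C X Y. Add C f g \<in> hom C X Y)
   \<and> (\<forall>X Y a. \<forall>f \<in> hom C X Y. Smult C a f \<in> hom C X Y)
   \<and> (\<forall>X Y. \<forall>f \<in> hom C X Y. \<forall>g \<in> hom C X Y. \<forall>h \<in> hom C X Y.
        Add C (Add C f g) h = Add C f (Add C g h))
   \<and> (\<forall>X Y. \<forall>f \<in> hom C X Y. \<forall>g \<in> hom C X Y. Add C f g = Add C g f)
   \<and> (\<forall>X Y. \<forall>f \<in> hom C X Y. Add C f (Zero C X Y) = f)
   \<and> (\<forall>X Y. \<forall>f \<in> hom C X Y. \<exists>g \<in> hom C X Y. Add C f g = Zero C X Y)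
   \<and> (\<forall>X Y a. \<forall>f \<in> hom C X Y. \<forall>g \<in> hom C X Y.
        Smult C a (Add C f g) = Add C (Smult C a f) (Smult C a g))
   \<and> (\<forall>X Y a b. \<forall>f \<in> hom C X Y. Smult C (a + b) f = Add C (Smult C a f) (Smult C b f))
   \<and> (\<forall>X Y a b. \<forall>f \<in> hom C X Y. Smult C (a * b) f = Smult C a (Smult C b f))
   \<and> (\<forall>X Y. \<forall>f \<in> hom C X Y. Smult C 1 f = f)
   \<and> (\<forall>X Y Z. \<forall>f1 \<in> hom C X Y. \<forall>f2 \<in> hom C X Y. \<forall>g \<in> hom C Y Z.
        Comp C g (Add C f1 f2) = Add C (Comp C g f1) (Comp C g f2))
   \<and> (\<forall>X Y Z. \<forall>f \<in> hom C X Y. \<forall>g1 \<in> hom C Y Z. \<forall>g2 \<in> hom C Y Z.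
        Comp C (Add C g1 g2) f = Add C (Comp C g1 f) (Comp C g2 f))
   \<and> (\<forall>X Y Z a. \<forall>f \<in> hom C X Y. \<forall>g \<in> hom C Y Z.
        Comp C g (Smult C a f) = Smult C a (Comp C g f)
      \<and> Comp C (Smult C a g) f = Smult C a (Comp C g f))"

definition additive_ax :: "('o, 'm, 'k::field, 'z) rcat_scheme \<Rightarrow> bool" where
  "additive_ax C \<longleftrightarrow>
     (\<exists>Z. Id C Z = Zero C Z Z)
   \<and> (\<forall>X Y. \<exists>P. \<exists>i1 \<in> hom C X P. \<exists>i2 \<in> hom C Y P. \<exists>p1 \<in> hom C P X. \<exists>p2 \<in> hom C P Y.
        Comp C p1 i1 = Id C X \<and> Comp C p2 i2 = Id C Y
      \<and> Comp C p1 i2 = Zero C Y X \<and> Comp C p2 i1 = Zero C X Y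
      \<and> Add C (Comp C i1 p1) (Comp C i2 p2) = Id C P)"

definition idem_complete_ax :: "('o, 'm, 'k, 'z) rcat_scheme \<Rightarrow> bool" where
  "idem_complete_ax C \<longleftrightarrow>
     (\<forall>X. \<forall>e \<in> hom C X X. Comp C e e = e \<longrightarrow>
        (\<exists>Y. \<exists>r \<in> hom C X Y. \<exists>s \<in> hom C Y X. Comp C r s = Id C Y \<and> Comp C s r = e))"

definition strict_monoidal_ax :: "('o, 'm, 'k::field, 'z) rcat_scheme \<Rightarrow> bool" where
  "strict_monoidal_ax C \<longleftrightarrow>
     (\<forall>X Y Z. Tens C (Tens C X Y) Z = Tens C X (Tens C Y Z))
   \<and> (\<forall>X. Tens C (Unit C) X = X \<and> Tens C X (Unit C) = X)
   \<and> (\<forall>f g. TensM C f g \<in> hom C (Tens C (Dom C f) (Dom C g)) (Tens C (Cod C f) (Cod C g)))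
   \<and> (\<forall>f g h. TensM C (TensM C f g) h = TensM C f (TensM C g h))
   \<and> (\<forall>f. TensM C (Id C (Unit C)) f = f \<and> TensM C f (Id C (Unit C)) = f)
   \<and> (\<forall>X Y. TensM C (Id C X) (Id C Y) = Id C (Tens C X Y))
   \<and> (\<forall>f1 g1 f2 g2. Cod C f1 = Dom C g1 \<longrightarrow> Cod C f2 = Dom C g2 \<longrightarrow>
        TensM C (Comp C g1 f1) (Comp C g2 f2) = Comp C (TensM C g1 g2) (TensM C f1 f2))
   \<and> (\<forall>X Y. \<forall>f1 \<in> hom C X Y. \<forall>f2 \<in> hom C X Y. \<forall>g.
        TensM C (Add C f1 f2) g = Add C (TensM C f1 g) (TensM C f2 g)
      \<and> TensM C g (Add C f1 f2) = Add C (TensM C g f1) (TensM C g f2))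
   \<and> (\<forall>a f g. TensM C (Smult C a f) g = Smult C a (TensM C f g)
            \<and> TensM C g (Smult C a f) = Smult C a (TensM C g f))"

definition braided_ax :: "('o, 'm, 'k, 'z) rcat_scheme \<Rightarrow> bool" where
  "braided_ax C \<longleftrightarrow>
     (\<forall>X Y. Braid C X Y \<in> hom C (Tens C X Y) (Tens C Y X) \<and> is_iso C (Braid C X Y))
   \<and> (\<forall>f g. Comp C (Braid C (Cod C f) (Cod C g)) (TensM C f g)
            = Comp C (TensM C g f) (Braid C (Dom C f) (Dom C g)))
   \<and> (\<forall>X Y Z. Braid C X (Tens C Y Z)
        = Comp C (TensM C (Id C Y) (Braid C X Z)) (TensM C (Braid C X Y) (Id C Z)))
   \<and> (\<forall>X Y Z. Braid C (Tens C X Y) Z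
        = Comp C (TensM C (Braid C X Z) (Id C Y)) (TensM C (Id C X) (Braid C Y Z)))"

definition rigid_ax :: "('o, 'm, 'k, 'z) rcat_scheme \<Rightarrow> bool" where
  "rigid_ax C \<longleftrightarrow>
     (\<forall>X. Ev C X \<in> hom C (Tens C (Dual C X) X) (Unit C)
        \<and> Coev C X \<in> hom C (Unit C) (Tens C X (Dual C X)))
   \<and> (\<forall>X. Comp C (TensM C (Id C X) (Ev C X)) (TensM C (Coev C X) (Id C X)) = Id C X)
   \<and> (\<forall>X. Comp C (TensM C (Ev C X) (Id C (Dual C X))) (TensM C (Id C (Dual C X)) (Coev C X))
          = Id C (Dual C X))"

definition dualM :: "('o, 'm, 'k, 'z) rcat_scheme \<Rightarrow> 'm \<Rightarrow> 'm" where
  "dualM C f = (let X = Dom C f; Y = Cod C f in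
     Comp C (TensM C (Ev C Y) (Id C (Dual C X)))
       (Comp C (TensM C (TensM C (Id C (Dual C Y)) f) (Id C (Dual C X)))
               (TensM C (Id C (Dual C Y)) (Coev C X))))"

text \<open>Twist (Turaev's convention).\<close>
definition twist_ax :: "('o, 'm, 'k, 'z) rcat_scheme \<Rightarrow> bool" where
  "twist_ax C \<longleftrightarrow>
     (\<forall>X. Twist C X \<in> hom C X X \<and> is_iso C (Twist C X))
   \<and> (\<forall>f. Comp C (Twist C (Cod C f)) f = Comp C f (Twist C (Dom C f)))
   \<and> (\<forall>X Y. Twist C (Tens C X Y)
        = Comp C (Braid C Y X) (Comp C (Braid C X Y) (TensM C (Twist C X) (Twist C Y))))
   \<and> (\<forall>X. dualM C (Twist C X) = Twist C (Dual C X))"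

definition simple_unit_ax :: "('o, 'm, 'k::field, 'z) rcat_scheme \<Rightarrow> bool" where
  "simple_unit_ax C \<longleftrightarrow>
     Id C (Unit C) \<noteq> Zero C (Unit C) (Unit C)
   \<and> (\<forall>f \<in> hom C (Unit C) (Unit C). \<exists>a. f = Smult C a (Id C (Unit C)))"

definition ribbon_category :: "('o, 'm, 'k::field, 'z) rcat_scheme \<Rightarrow> bool" where
  "ribbon_category C \<longleftrightarrow> category_ax C \<and> klinear_ax C \<and> additive_ax C
     \<and> idem_complete_ax C \<and> strict_monoidal_ax C \<and> braided_ax C \<and> rigid_ax C
     \<and> twist_ax C \<and> simple_unit_ax C"

text \<open>Right (co)evaluations of the pivotal structure induced by the ribbon structure:
  tev X : X (x) X* -> 1 and tcoev X : 1 -> X* (x) X.\<close>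
definition tev :: "('o, 'm, 'k, 'z) rcat_scheme \<Rightarrow> 'o \<Rightarrow> 'm" where
  "tev C X = Comp C (Ev C X) (Comp C (Braid C X (Dual C X)) (TensM C (Twist C X) (Id C (Dual C X))))"

definition tcoev :: "('o, 'm, 'k, 'z) rcat_scheme \<Rightarrow> 'o \<Rightarrow> 'm" where
  "tcoev C X = Comp C (TensM C (Id C (Dual C X)) (Twist C X)) (Comp C (Braid C X (Dual C X)) (Coev C X))"

definition frobenius_algebra ::
  "('o, 'm, 'k, 'z) rcat_scheme \<Rightarrow> 'o \<Rightarrow> 'm \<Rightarrow> 'm \<Rightarrow> 'm \<Rightarrow> 'm \<Rightarrow> bool" where
  "frobenius_algebra C A mu eta delta eps \<longleftrightarrow>
     mu \<in> hom C (Tens C A A) A \<and> eta \<in> hom C (Unit C) A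
   \<and> delta \<in> hom C A (Tens C A A) \<and> eps \<in> hom C A (Unit C)
   \<and> Comp C mu (TensM C mu (Id C A)) = Comp C mu (TensM C (Id C A) mu)
   \<and> Comp C mu (TensM C eta (Id C A)) = Id C A
   \<and> Comp C mu (TensM C (Id C A) eta) = Id C A
   \<and> Comp C (TensM C delta (Id C A)) delta = Comp C (TensM C (Id C A) delta) delta
   \<and> Comp C (TensM C eps (Id C A)) delta = Id C A
   \<and> Comp C (TensM C (Id C A) eps) delta = Id C A
   \<and> Comp C (TensM C (Id C A) mu) (TensM C delta (Id C A)) = Comp C delta mu
   \<and> Comp C delta mu = Comp C (TensM C mu (Id C A)) (TensM C (Id C A) delta)"

definition commutative_alg :: "('o, 'm, 'k, 'z) rcat_scheme \<Rightarrow> 'o \<Rightarrow> 'm \<Rightarrow> bool" where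
  "commutative_alg C A mu \<longleftrightarrow> Comp C mu (Braid C A A) = mu"

definition delta_separable :: "('o, 'm, 'k, 'z) rcat_scheme \<Rightarrow> 'o \<Rightarrow> 'm \<Rightarrow> 'm \<Rightarrow> bool" where
  "delta_separable C A mu delta \<longleftrightarrow> Comp C mu delta = Id C A"

definition special_frob ::
  "('o, 'm, 'k::field, 'z) rcat_scheme \<Rightarrow> 'o \<Rightarrow> 'm \<Rightarrow> 'm \<Rightarrow> 'm \<Rightarrow> 'm \<Rightarrow> bool" where
  "special_frob C A mu eta delta eps \<longleftrightarrow>
     (\<exists>a. a \<noteq> 0 \<and> Comp C eps eta = Smult C a (Id C (Unit C)))
   \<and> (\<exists>b. b \<noteq> 0 \<and> Comp C mu delta = Smult C b (Id C A))"

definition haploid :: "('o, 'm, 'k::field, 'z) rcat_scheme \<Rightarrow> 'o \<Rightarrow> bool" where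
  "haploid C A \<longleftrightarrow> (\<exists>f \<in> hom C (Unit C) A. f \<noteq> Zero C (Unit C) A
      \<and> (\<forall>g \<in> hom C (Unit C) A. \<exists>a. g = Smult C a f))"

definition inverse_mor :: "('o, 'm, 'k, 'z) rcat_scheme \<Rightarrow> 'm \<Rightarrow> 'm" where
  "inverse_mor C f = (THE g. g \<in> hom C (Cod C f) (Dom C f)
      \<and> Comp C g f = Id C (Dom C f) \<and> Comp C f g = Id C (Cod C f))"

definition nakayama ::
  "('o, 'm, 'k, 'z) rcat_scheme \<Rightarrow> 'o \<Rightarrow> 'm \<Rightarrow> 'm \<Rightarrow> 'm" where
  "nakayama C A mu eps = (let kappa = Comp C eps mu;
      Phi1 = Comp C (TensM C kappa (Id C (Dual C A))) (TensM C (Id C A) (Coev C A));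
      Phi2 = Comp C (TensM C (Id C (Dual C A)) kappa) (TensM C (tcoev C A) (Id C A))
    in Comp C (inverse_mor C Phi1) Phi2)"

end

theory Submission
  imports Defs
begin

text \<open>
  For a commutative Frobenius algebra the Nakayama automorphism is the inverse of the twist:
  transposing \<open>\<Phi>\<^sub>2\<close> along the evaluation gives the pairing \<open>\<kappa> = \<epsilon> \<mu>\<close> precomposed with
  \<open>\<theta> \<otimes> id\<close> and the braiding, and since \<open>\<theta>\<^sub>A\<close> is an algebra automorphism of a commutative
  algebra, \<open>\<kappa>\<close> is invariant under \<open>\<theta> \<otimes> \<theta>\<close> and under the braiding; hence \<open>\<Phi>\<^sub>2 \<theta> = \<Phi>\<^sub>1\<close>.
  So \<open>N\<^sub>A\<close> is an algebra endomorphism.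

  For any algebra endomorphism \<open>\<phi>\<close>, expanding \<open>\<Delta>\<close> through the copairing \<open>\<Delta> \<eta>\<close> in two ways shows
  that \<open>\<mu> (\<phi> \<otimes> id) \<Delta>\<close> is both left multiplication by \<open>w = \<mu> (\<phi> \<otimes> id) \<Delta> \<eta>\<close> and
  \<open>\<phi>\<close> followed by right multiplication by \<open>w\<close>. Haploidity gives \<open>w = c \<eta>\<close>, so
  \<open>c id = c \<phi>\<close>, and \<open>\<phi> \<noteq> id\<close> forces \<open>c = 0\<close>.
\<close>

locale ribbon_cat =
  fixes C :: "('o, 'm, 'k::field) rcat"
  assumes ribbon: "ribbon_category C"
begin

abbreviation compose (infixr "\<cdot>" 55) where "g \<cdot> f \<equiv> Comp C g f"
abbreviation tensor (infixr "\<otimes>" 65) where "f \<otimes> g \<equiv> TensM C f g"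
abbreviation tensor_obj (infixr "\<odot>" 70) where "X \<odot> Y \<equiv> Tens C X Y"
abbreviation idm where "idm X \<equiv> Id C X"
abbreviation unit_obj ("\<one>") where "\<one> \<equiv> Unit C"
abbreviation smult where "smult \<equiv> Smult C"

lemma category: "category_ax C" and klinear: "klinear_ax C"
  and strict_monoidal: "strict_monoidal_ax C" and braided: "braided_ax C"
  and rigid: "rigid_ax C" and twist: "twist_ax C" and simple_unit: "simple_unit_ax C"
  using ribbon unfolding ribbon_category_def by auto

lemma dom_id[simp]: "Dom C (idm X) = X" and cod_id[simp]: "Cod C (idm X) = X"
  using category unfolding category_ax_def hom_def by auto

lemma dom_comp[simp]: "Cod C f = Dom C g \<Longrightarrow> Dom C (g \<cdot> f) = Dom C f"
  and cod_comp[simp]: "Cod C f = Dom C g \<Longrightarrow> Cod C (g \<cdot> f) = Cod C g"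
  using category unfolding category_ax_def hom_def by auto

lemma comp_id_right[simp]: "Dom C f = X \<Longrightarrow> f \<cdot> idm X = f"
  and comp_id_left[simp]: "Cod C f = X \<Longrightarrow> idm X \<cdot> f = f"
  using category unfolding category_ax_def by auto

lemma comp_assoc:
  "Cod C f = Dom C g \<Longrightarrow> Cod C g = Dom C h \<Longrightarrow> h \<cdot> (g \<cdot> f) = (h \<cdot> g) \<cdot> f"
  using category unfolding category_ax_def by auto

lemma comp_eq_assoc:
  "a \<cdot> b = c \<Longrightarrow> Cod C r = Dom C b \<Longrightarrow> Cod C b = Dom C a \<Longrightarrow> a \<cdot> (b \<cdot> r) = c \<cdot> r"
  by (simp add: comp_assoc)

lemma iso_idempotent_eq_id:
  assumes "Dom C f = X" "Cod C f = X" "f \<cdot> f = f" "is_iso C f"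
  shows "f = idm X"
proof -
  obtain g where g: "Dom C g = X" "Cod C g = X" "g \<cdot> f = idm X"
    using assms unfolding is_iso_def hom_def by auto
  have "f = (g \<cdot> f) \<cdot> f" using assms g by simp
  also have "\<dots> = g \<cdot> (f \<cdot> f)" using assms g by (intro comp_assoc[symmetric]) auto
  also have "\<dots> = idm X" by (simp only: assms(3) g(3))
  finally show ?thesis .
qed

subsection \<open>Strict monoidal structure\<close>

lemma tensor_obj_assoc[simp]: "(X \<odot> Y) \<odot> Z = X \<odot> (Y \<odot> Z)"
  and tensor_obj_unit[simp]: "\<one> \<odot> X = X" "X \<odot> \<one> = X"
  using strict_monoidal unfolding strict_monoidal_ax_def by auto

lemma dom_tensor[simp]: "Dom C (f \<otimes> g) = Dom C f \<odot> Dom C g"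
  and cod_tensor[simp]: "Cod C (f \<otimes> g) = Cod C f \<odot> Cod C g"
  using strict_monoidal unfolding strict_monoidal_ax_def hom_def by auto

lemma tensor_assoc[simp]: "(f \<otimes> g) \<otimes> h = f \<otimes> (g \<otimes> h)"
  and tensor_id_unit[simp]: "idm \<one> \<otimes> f = f" "f \<otimes> idm \<one> = f"
  and tensor_id_id[simp]: "idm X \<otimes> idm Y = idm (X \<odot> Y)"
  using strict_monoidal unfolding strict_monoidal_ax_def by auto

lemma id_tensor_id_tensor[simp]: "idm X \<otimes> (idm Y \<otimes> f) = idm (X \<odot> Y) \<otimes> f"
  by (metis tensor_assoc tensor_id_id)

lemma interchange: "Cod C f1 = Dom C g1 \<Longrightarrow> Cod C f2 = Dom C g2 \<Longrightarrow>
   (g1 \<otimes> g2) \<cdot> (f1 \<otimes> f2) = (g1 \<cdot> f1) \<otimes> (g2 \<cdot> f2)"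
  using strict_monoidal unfolding strict_monoidal_ax_def by auto

lemma id_tensor_comp: "Cod C f = Dom C g \<Longrightarrow> (idm X \<otimes> g) \<cdot> (idm X \<otimes> f) = idm X \<otimes> (g \<cdot> f)"
  by (simp add: interchange)

lemma tensor_id_comp: "Cod C f = Dom C g \<Longrightarrow> (g \<otimes> idm X) \<cdot> (f \<otimes> idm X) = (g \<cdot> f) \<otimes> idm X"
  by (simp add: interchange)

lemma tensor_id_comp_id_tensor: "Dom C f = X \<Longrightarrow> Cod C g = Y \<Longrightarrow> (f \<otimes> idm Y) \<cdot> (idm X \<otimes> g) = f \<otimes> g"
  by (simp add: interchange)

lemma id_tensor_comp_tensor_id: "Cod C f = X \<Longrightarrow> Dom C g = Y \<Longrightarrow> (idm X \<otimes> g) \<cdot> (f \<otimes> idm Y) = f \<otimes> g"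
  by (simp add: interchange)

lemma comp_cod_unit_tensor_id: "Cod C f = \<one> \<Longrightarrow> Dom C g = Y \<Longrightarrow> g \<cdot> (f \<otimes> idm Y) = f \<otimes> g"
  using interchange[of f "idm \<one>" "idm Y" g] by simp

lemma dom_unit_tensor_id_comp: "Dom C f = \<one> \<Longrightarrow> Cod C g = Y \<Longrightarrow> (f \<otimes> idm Y) \<cdot> g = f \<otimes> g"
  using interchange[of "idm \<one>" f g "idm Y"] by simp

lemma comp_id_tensor_cod_unit: "Cod C g = \<one> \<Longrightarrow> Dom C f = X \<Longrightarrow> f \<cdot> (idm X \<otimes> g) = f \<otimes> g"
  using interchange[of "idm X" f g "idm \<one>"] by simp

lemma id_tensor_dom_unit_comp: "Dom C g = \<one> \<Longrightarrow> Cod C f = X \<Longrightarrow> (idm X \<otimes> g) \<cdot> f = f \<otimes> g"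
  using interchange[of f "idm X" "idm \<one>" g] by simp

subsection \<open>Braiding, duality and twist\<close>

lemma dom_braid[simp]: "Dom C (Braid C X Y) = X \<odot> Y"
  and cod_braid[simp]: "Cod C (Braid C X Y) = Y \<odot> X"
  and braid_iso: "is_iso C (Braid C X Y)"
  using braided unfolding braided_ax_def hom_def by auto

lemma braid_natural:
  "Braid C (Cod C f) (Cod C g) \<cdot> (f \<otimes> g) = (g \<otimes> f) \<cdot> Braid C (Dom C f) (Dom C g)"
  using braided unfolding braided_ax_def by auto

lemma braid_hexagon1: "Braid C X (Y \<odot> Z) = (idm Y \<otimes> Braid C X Z) \<cdot> (Braid C X Y \<otimes> idm Z)"
  and braid_hexagon2: "Braid C (X \<odot> Y) Z = (Braid C X Z \<otimes> idm Y) \<cdot> (idm X \<otimes> Braid C Y Z)"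
  using braided unfolding braided_ax_def by auto

lemma braid_unit_right[simp]: "Braid C X \<one> = idm X"
proof -
  have "Braid C X \<one> = Braid C X \<one> \<cdot> Braid C X \<one>"
    using braid_hexagon1[of X \<one> \<one>] by simp
  then show ?thesis using iso_idempotent_eq_id[of "Braid C X \<one>" X] braid_iso by simp
qed

lemma braid_unit_left[simp]: "Braid C \<one> X = idm X"
proof -
  have "Braid C \<one> X = Braid C \<one> X \<cdot> Braid C \<one> X"
    using braid_hexagon2[of \<one> \<one> X] by simp
  then show ?thesis using iso_idempotent_eq_id[of "Braid C \<one> X" X] braid_iso by simp
qed

lemma tensor_id_eq_braid_id_tensor:
  "Cod C f = \<one> \<Longrightarrow> f \<otimes> idm X = (idm X \<otimes> f) \<cdot> Braid C (Dom C f) X"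
  using braid_natural[of f "idm X"] by simp

lemma dom_ev[simp]: "Dom C (Ev C X) = Dual C X \<odot> X" and cod_ev[simp]: "Cod C (Ev C X) = \<one>"
  and dom_coev[simp]: "Dom C (Coev C X) = \<one>" and cod_coev[simp]: "Cod C (Coev C X) = X \<odot> Dual C X"
  using rigid unfolding rigid_ax_def hom_def by auto

lemma zigzag1: "(idm X \<otimes> Ev C X) \<cdot> (Coev C X \<otimes> idm X) = idm X"
  and zigzag2: "(Ev C X \<otimes> idm (Dual C X)) \<cdot> (idm (Dual C X) \<otimes> Coev C X) = idm (Dual C X)"
  using rigid unfolding rigid_ax_def by auto

lemma mor_to_dual_eq_transpose:
  assumes g: "Dom C g = Y" "Cod C g = Dual C X"
  shows "g = ((Ev C X \<cdot> (g \<otimes> idm X)) \<otimes> idm (Dual C X)) \<cdot> (idm Y \<otimes> Coev C X)"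
proof -
  have "((Ev C X \<cdot> (g \<otimes> idm X)) \<otimes> idm (Dual C X)) \<cdot> (idm Y \<otimes> Coev C X)
      = ((Ev C X \<otimes> idm (Dual C X)) \<cdot> ((g \<otimes> idm X) \<otimes> idm (Dual C X))) \<cdot> (idm Y \<otimes> Coev C X)"
    using g by (subst tensor_id_comp) simp_all
  also have "\<dots> = (Ev C X \<otimes> idm (Dual C X)) \<cdot> ((g \<otimes> idm (X \<odot> Dual C X)) \<cdot> (idm Y \<otimes> Coev C X))"
    using g by (subst comp_assoc[symmetric]) simp_all
  also have "\<dots> = (Ev C X \<otimes> idm (Dual C X)) \<cdot> ((idm (Dual C X) \<otimes> Coev C X) \<cdot> g)"
    using g by (simp add: tensor_id_comp_id_tensor id_tensor_dom_unit_comp)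
  also have "\<dots> = g" using g by (subst comp_assoc) (simp_all add: zigzag2)
  finally show ?thesis by simp
qed

lemma mor_to_dual_eqI:
  assumes "Dom C g = Y" "Cod C g = Dual C X" "Dom C h = Y" "Cod C h = Dual C X"
    and "Ev C X \<cdot> (g \<otimes> idm X) = Ev C X \<cdot> (h \<otimes> idm X)"
  shows "g = h"
  using mor_to_dual_eq_transpose[of g Y X] mor_to_dual_eq_transpose[of h Y X] assms by simp

lemma dom_twist[simp]: "Dom C (Twist C X) = X" and cod_twist[simp]: "Cod C (Twist C X) = X"
  and twist_iso: "is_iso C (Twist C X)"
  using twist unfolding twist_ax_def hom_def by auto

lemma twist_natural: "Twist C (Cod C f) \<cdot> f = f \<cdot> Twist C (Dom C f)"
  and twist_tensor: "Twist C (X \<odot> Y) = Braid C Y X \<cdot> (Braid C X Y \<cdot> (Twist C X \<otimes> Twist C Y))"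
  using twist unfolding twist_ax_def by auto

lemma twist_unit[simp]: "Twist C \<one> = idm \<one>"
proof -
  have "Twist C \<one> = Twist C \<one> \<otimes> Twist C \<one>" using twist_tensor[of \<one> \<one>] by simp
  also have "\<dots> = Twist C \<one> \<cdot> Twist C \<one>"
    using interchange[of "Twist C \<one>" "idm \<one>" "idm \<one>" "Twist C \<one>"] by simp
  finally show ?thesis using iso_idempotent_eq_id[of "Twist C \<one>" \<one>] twist_iso by simp
qed

lemma dom_tcoev[simp]: "Dom C (tcoev C X) = \<one>" and cod_tcoev[simp]: "Cod C (tcoev C X) = Dual C X \<odot> X"
  by (simp_all add: tcoev_def)

lemma ev_braid_tcoev:
  "(Ev C X \<otimes> idm X) \<cdot> ((idm (Dual C X) \<otimes> Braid C X X) \<cdot> (tcoev C X \<otimes> idm X)) = Twist C X"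
proof -
  let ?X' = "Dual C X" and ?ev = "Ev C X" and ?c = "Braid C X X" and ?\<theta> = "Twist C X"
  have t: "tcoev C X \<otimes> idm X
      = (idm ?X' \<otimes> (?\<theta> \<otimes> idm X)) \<cdot> ((Braid C X ?X' \<otimes> idm X) \<cdot> (Coev C X \<otimes> idm X))"
    unfolding tcoev_def
    by (subst tensor_id_comp[symmetric], simp, subst tensor_id_comp[symmetric], simp_all)
  have h: "(?ev \<otimes> idm X) \<cdot> ((idm ?X' \<otimes> ?c) \<cdot> (Braid C X ?X' \<otimes> idm X)) = idm X \<otimes> ?ev"
    using braid_natural[of "idm X" ?ev] braid_hexagon1[of X ?X' X] by simp
  have "(idm ?X' \<otimes> ?c) \<cdot> (idm ?X' \<otimes> (?\<theta> \<otimes> idm X)) = (idm (?X' \<odot> X) \<otimes> ?\<theta>) \<cdot> (idm ?X' \<otimes> ?c)"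
    using id_tensor_comp[of ?c "idm X \<otimes> ?\<theta>" ?X'] braid_natural[of ?\<theta> "idm X"]
    by (simp add: id_tensor_comp)
  then have "(?ev \<otimes> idm X) \<cdot> ((idm ?X' \<otimes> ?c) \<cdot> (tcoev C X \<otimes> idm X))
      = ((?ev \<otimes> idm X) \<cdot> (idm (?X' \<odot> X) \<otimes> ?\<theta>))
        \<cdot> ((idm ?X' \<otimes> ?c) \<cdot> ((Braid C X ?X' \<otimes> idm X) \<cdot> (Coev C X \<otimes> idm X)))"
    unfolding t by (simp add: comp_assoc)
  also have "\<dots> = (?\<theta> \<cdot> (?ev \<otimes> idm X))
      \<cdot> ((idm ?X' \<otimes> ?c) \<cdot> ((Braid C X ?X' \<otimes> idm X) \<cdot> (Coev C X \<otimes> idm X)))"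
    by (simp add: tensor_id_comp_id_tensor comp_cod_unit_tensor_id)
  also have "\<dots> = ?\<theta> \<cdot> (((?ev \<otimes> idm X) \<cdot> ((idm ?X' \<otimes> ?c) \<cdot> (Braid C X ?X' \<otimes> idm X)))
      \<cdot> (Coev C X \<otimes> idm X))"
    by (simp add: comp_assoc)
  also have "\<dots> = ?\<theta>" by (simp add: h zigzag1)
  finally show ?thesis .
qed

subsection \<open>Linear structure\<close>

lemma dom_smult[simp]: "Dom C (smult a f) = Dom C f" and cod_smult[simp]: "Cod C (smult a f) = Cod C f"
  using klinear unfolding klinear_ax_def hom_def by auto

lemma dom_zero[simp]: "Dom C (Zero C X Y) = X" and cod_zero[simp]: "Cod C (Zero C X Y) = Y"
  using klinear unfolding klinear_ax_def hom_def by auto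

lemma smult_smult: "smult (a * b) f = smult a (smult b f)" and smult_one[simp]: "smult 1 f = f"
  using klinear unfolding klinear_ax_def hom_def by auto

lemma comp_smult: "Cod C f = Dom C g \<Longrightarrow> g \<cdot> smult a f = smult a (g \<cdot> f)"
  using klinear unfolding klinear_ax_def hom_def by auto

lemma tensor_smult: "smult a f \<otimes> g = smult a (f \<otimes> g)" "g \<otimes> smult a f = smult a (g \<otimes> f)"
  using strict_monoidal unfolding strict_monoidal_ax_def by auto

lemma smult_add: "smult (a + b) f = Add C (smult a f) (smult b f)"
proof -
  have "\<forall>X Y a b. \<forall>f \<in> hom C X Y. smult (a + b) f = Add C (smult a f) (smult b f)"
    using klinear unfolding klinear_ax_def by (elim conjE) assumption
  then show ?thesis by (simp add: hom_def)
qed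

lemma add_assoc:
  assumes "f \<in> hom C X Y" "g \<in> hom C X Y" "h \<in> hom C X Y"
  shows "Add C (Add C f g) h = Add C f (Add C g h)"
proof -
  have "\<forall>X Y. \<forall>f \<in> hom C X Y. \<forall>g \<in> hom C X Y. \<forall>h \<in> hom C X Y.
      Add C (Add C f g) h = Add C f (Add C g h)"
    using klinear unfolding klinear_ax_def by (elim conjE) assumption
  then show ?thesis using assms by blast
qed

lemma add_zero: "f \<in> hom C X Y \<Longrightarrow> Add C f (Zero C X Y) = f"
proof -
  have "\<forall>X Y. \<forall>f \<in> hom C X Y. Add C f (Zero C X Y) = f"
    using klinear unfolding klinear_ax_def by (elim conjE) assumption
  then show "f \<in> hom C X Y \<Longrightarrow> ?thesis" by blast
qed

lemma add_inverse: "f \<in> hom C X Y \<Longrightarrow> \<exists>g \<in> hom C X Y. Add C f g = Zero C X Y"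
proof -
  have "\<forall>X Y. \<forall>f \<in> hom C X Y. \<exists>g \<in> hom C X Y. Add C f g = Zero C X Y"
    using klinear unfolding klinear_ax_def by (elim conjE) assumption
  then show "f \<in> hom C X Y \<Longrightarrow> ?thesis" by blast
qed

lemma smult_zero: "smult 0 f = Zero C (Dom C f) (Cod C f)"
proof -
  let ?X = "Dom C f" and ?Y = "Cod C f" and ?S = "smult 0 f"
  have S: "?S \<in> hom C ?X ?Y" by (simp add: hom_def)
  obtain g where g: "g \<in> hom C ?X ?Y" "Add C ?S g = Zero C ?X ?Y"
    using add_inverse[OF S] by blast
  have "Zero C ?X ?Y = Add C (Add C ?S ?S) g" using g smult_add[of 0 0 f] by simp
  also have "\<dots> = Add C ?S (Add C ?S g)" using add_assoc[OF S S g(1)] .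
  also have "\<dots> = ?S" using g add_zero[OF S] by simp
  finally show ?thesis by simp
qed

lemma smult_cancel: "a \<noteq> 0 \<Longrightarrow> smult a f = smult a g \<Longrightarrow> f = g"
  by (metis smult_one smult_smult field_class.field_inverse)

lemma haploid_spanned_by_nonzero:
  assumes "haploid C X" "e \<in> hom C \<one> X" "e \<noteq> Zero C \<one> X" "g \<in> hom C \<one> X"
  shows "\<exists>c. g = smult c e"
proof -
  obtain f where f: "f \<in> hom C \<one> X" "\<forall>h \<in> hom C \<one> X. \<exists>a. h = smult a f"
    using assms(1) unfolding haploid_def by blast
  obtain a b where ab: "e = smult a f" "g = smult b f" using f(2) assms(2,4) by blast
  have "a \<noteq> 0" using ab(1) assms(3) f(1) by (auto simp: smult_zero hom_def)
  then have "g = smult (b * inverse a) e" using ab by (simp add: smult_smult[symmetric] mult.assoc)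
  then show ?thesis ..
qed

end

locale frobenius = ribbon_cat +
  fixes A and mu eta delta eps
  assumes frobenius: "frobenius_algebra C A mu eta delta eps"
begin

lemma dom_mu[simp]: "Dom C mu = A \<odot> A" and cod_mu[simp]: "Cod C mu = A"
  and dom_eta[simp]: "Dom C eta = \<one>" and cod_eta[simp]: "Cod C eta = A"
  and dom_delta[simp]: "Dom C delta = A" and cod_delta[simp]: "Cod C delta = A \<odot> A"
  and dom_eps[simp]: "Dom C eps = A" and cod_eps[simp]: "Cod C eps = \<one>"
  using frobenius unfolding frobenius_algebra_def hom_def by auto

lemma mult_assoc: "mu \<cdot> (mu \<otimes> idm A) = mu \<cdot> (idm A \<otimes> mu)"
  and mult_unit_left: "mu \<cdot> (eta \<otimes> idm A) = idm A"
  and mult_unit_right: "mu \<cdot> (idm A \<otimes> eta) = idm A"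
  and comult_counit_left: "(eps \<otimes> idm A) \<cdot> delta = idm A"
  and comult_counit_right: "(idm A \<otimes> eps) \<cdot> delta = idm A"
  and frobenius_left: "(idm A \<otimes> mu) \<cdot> (delta \<otimes> idm A) = delta \<cdot> mu"
  and frobenius_right: "(mu \<otimes> idm A) \<cdot> (idm A \<otimes> delta) = delta \<cdot> mu"
  using frobenius unfolding frobenius_algebra_def by auto

definition pairing where "pairing = eps \<cdot> mu"
definition copairing where "copairing = delta \<cdot> eta"

lemma dom_pairing[simp]: "Dom C pairing = A \<odot> A" and cod_pairing[simp]: "Cod C pairing = \<one>"
  and dom_copairing[simp]: "Dom C copairing = \<one>" and cod_copairing[simp]: "Cod C copairing = A \<odot> A"
  by (simp_all add: pairing_def copairing_def)

lemma pairing_copairing_zigzag1: "(pairing \<otimes> idm A) \<cdot> (idm A \<otimes> copairing) = idm A"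
proof -
  have "(pairing \<otimes> idm A) \<cdot> (idm A \<otimes> copairing)
      = (eps \<otimes> idm A) \<cdot> ((mu \<otimes> idm A) \<cdot> ((idm A \<otimes> delta) \<cdot> (idm A \<otimes> eta)))"
    unfolding pairing_def copairing_def
    by (simp add: tensor_id_comp[symmetric] id_tensor_comp[symmetric] comp_assoc)
  also have "\<dots> = (eps \<otimes> idm A) \<cdot> (delta \<cdot> (mu \<cdot> (idm A \<otimes> eta)))"
    by (simp add: comp_eq_assoc[OF frobenius_right] comp_assoc[symmetric])
  also have "\<dots> = idm A" by (simp add: mult_unit_right comult_counit_left)
  finally show ?thesis .
qed

lemma pairing_copairing_zigzag2: "(idm A \<otimes> pairing) \<cdot> (copairing \<otimes> idm A) = idm A"
proof -
  have "(idm A \<otimes> pairing) \<cdot> (copairing \<otimes> idm A)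
      = (idm A \<otimes> eps) \<cdot> ((idm A \<otimes> mu) \<cdot> ((delta \<otimes> idm A) \<cdot> (eta \<otimes> idm A)))"
    unfolding pairing_def copairing_def
    by (simp add: tensor_id_comp[symmetric] id_tensor_comp[symmetric] comp_assoc)
  also have "\<dots> = (idm A \<otimes> eps) \<cdot> (delta \<cdot> (mu \<cdot> (eta \<otimes> idm A)))"
    by (simp add: comp_eq_assoc[OF frobenius_left] comp_assoc[symmetric])
  also have "\<dots> = idm A" by (simp add: mult_unit_left comult_counit_right)
  finally show ?thesis .
qed

lemma comult_eq_copairing_left: "delta = (idm A \<otimes> mu) \<cdot> (copairing \<otimes> idm A)"
proof -
  have "(idm A \<otimes> mu) \<cdot> (copairing \<otimes> idm A) = (idm A \<otimes> mu) \<cdot> ((delta \<otimes> idm A) \<cdot> (eta \<otimes> idm A))"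
    by (simp add: interchange copairing_def)
  also have "\<dots> = delta \<cdot> (mu \<cdot> (eta \<otimes> idm A))"
    by (simp add: comp_eq_assoc[OF frobenius_left] comp_assoc[symmetric])
  finally show ?thesis by (simp add: mult_unit_left)
qed

lemma comult_eq_copairing_right: "delta = (mu \<otimes> idm A) \<cdot> (idm A \<otimes> copairing)"
proof -
  have "(mu \<otimes> idm A) \<cdot> (idm A \<otimes> copairing) = (mu \<otimes> idm A) \<cdot> ((idm A \<otimes> delta) \<cdot> (idm A \<otimes> eta))"
    by (simp add: interchange copairing_def)
  also have "\<dots> = delta \<cdot> (mu \<cdot> (idm A \<otimes> eta))"
    by (simp add: comp_eq_assoc[OF frobenius_right] comp_assoc[symmetric])
  finally show ?thesis by (simp add: mult_unit_right)
qed

definition twisted_window where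
  "twisted_window \<phi> = mu \<cdot> ((\<phi> \<otimes> idm A) \<cdot> copairing)"

lemma dom_twisted_window[simp]: "Cod C \<phi> = A \<Longrightarrow> Dom C \<phi> = A \<Longrightarrow> Dom C (twisted_window \<phi>) = \<one>"
  and cod_twisted_window[simp]: "Cod C \<phi> = A \<Longrightarrow> Dom C \<phi> = A \<Longrightarrow> Cod C (twisted_window \<phi>) = A"
  by (simp_all add: twisted_window_def)

lemma mult_endo_comult_eq_window_left:
  assumes \<phi>: "Dom C \<phi> = A" "Cod C \<phi> = A"
  shows "mu \<cdot> ((\<phi> \<otimes> idm A) \<cdot> delta) = mu \<cdot> (twisted_window \<phi> \<otimes> idm A)"
proof -
  have "(\<phi> \<otimes> idm A) \<cdot> delta = (idm A \<otimes> mu) \<cdot> ((\<phi> \<otimes> idm (A \<odot> A)) \<cdot> (copairing \<otimes> idm A))"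
    using \<phi> by (subst comult_eq_copairing_left) (simp add: comp_assoc interchange)
  also have "(\<phi> \<otimes> idm (A \<odot> A)) \<cdot> (copairing \<otimes> idm A) = ((\<phi> \<otimes> idm A) \<cdot> copairing) \<otimes> idm A"
    using \<phi> by (subst tensor_id_comp[symmetric]) simp_all
  finally have "mu \<cdot> ((\<phi> \<otimes> idm A) \<cdot> delta)
      = (mu \<cdot> (mu \<otimes> idm A)) \<cdot> (((\<phi> \<otimes> idm A) \<cdot> copairing) \<otimes> idm A)"
    using \<phi> by (simp add: comp_assoc mult_assoc)
  also have "\<dots> = mu \<cdot> (twisted_window \<phi> \<otimes> idm A)"
    using \<phi> unfolding twisted_window_def
    by (subst comp_assoc[symmetric]) (simp_all add: tensor_id_comp)
  finally show ?thesis .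
qed

lemma mult_endo_comult_eq_window_right:
  assumes \<phi>: "Dom C \<phi> = A" "Cod C \<phi> = A" and mult: "\<phi> \<cdot> mu = mu \<cdot> (\<phi> \<otimes> \<phi>)"
  shows "mu \<cdot> ((\<phi> \<otimes> idm A) \<cdot> delta) = mu \<cdot> (\<phi> \<otimes> twisted_window \<phi>)"
proof -
  have \<phi>_mult: "(\<phi> \<otimes> idm A) \<cdot> (mu \<otimes> idm A) = (mu \<otimes> idm A) \<cdot> ((\<phi> \<otimes> \<phi>) \<otimes> idm A)"
    using \<phi> by (simp add: tensor_id_comp mult, subst tensor_id_comp[symmetric], simp_all)
  have "mu \<cdot> ((\<phi> \<otimes> idm A) \<cdot> delta)
      = mu \<cdot> (((\<phi> \<otimes> idm A) \<cdot> (mu \<otimes> idm A)) \<cdot> (idm A \<otimes> copairing))"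
    using \<phi> by (subst comult_eq_copairing_right) (simp add: comp_assoc)
  also have "\<dots> = (mu \<cdot> (mu \<otimes> idm A)) \<cdot> ((\<phi> \<otimes> (\<phi> \<otimes> idm A)) \<cdot> (idm A \<otimes> copairing))"
    using \<phi> unfolding \<phi>_mult by (simp add: comp_assoc)
  also have "\<dots> = (mu \<cdot> (idm A \<otimes> mu)) \<cdot> (\<phi> \<otimes> ((\<phi> \<otimes> idm A) \<cdot> copairing))"
    using \<phi> by (simp add: interchange mult_assoc)
  also have "\<dots> = mu \<cdot> (\<phi> \<otimes> twisted_window \<phi>)"
    using \<phi> unfolding twisted_window_def
    by (subst comp_assoc[symmetric]) (simp_all add: interchange)
  finally show ?thesis .
qed

lemma special_unit_nonzero:
  assumes "special_frob C A mu eta delta eps"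
  shows "eta \<noteq> Zero C \<one> A"
proof
  assume eta: "eta = Zero C \<one> A"
  obtain a where a: "a \<noteq> 0" "eps \<cdot> eta = smult a (idm \<one>)"
    using assms unfolding special_frob_def by blast
  have "eps \<cdot> eta = eps \<cdot> smult 0 eta"
    using eta smult_zero[of eta] by simp
  also have "\<dots> = smult 0 (eps \<cdot> eta)" by (simp add: comp_smult)
  finally have "eps \<cdot> eta = smult 0 (eps \<cdot> eta)" .
  then have "smult a (idm \<one>) = smult a (smult 0 (idm \<one>))"
    using a by (simp add: smult_smult[symmetric])
  then have "idm \<one> = Zero C \<one> \<one>"
    using smult_cancel[OF a(1)] smult_zero[of "idm \<one>"] by simp
  then show False using simple_unit unfolding simple_unit_ax_def by simp
qed

lemma mult_endo_comult_eq_zero: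
  assumes haploid: "haploid C A" and eta: "eta \<noteq> Zero C \<one> A"
    and \<phi>: "Dom C \<phi> = A" "Cod C \<phi> = A" and mult: "\<phi> \<cdot> mu = mu \<cdot> (\<phi> \<otimes> \<phi>)"
    and nontrivial: "\<phi> \<noteq> idm A"
  shows "mu \<cdot> ((\<phi> \<otimes> idm A) \<cdot> delta) = Zero C A A"
proof -
  obtain c where c: "twisted_window \<phi> = smult c eta"
    using haploid_spanned_by_nonzero[OF haploid _ eta, of "twisted_window \<phi>"] \<phi>
    by (auto simp: hom_def)
  have left: "mu \<cdot> (twisted_window \<phi> \<otimes> idm A) = smult c (idm A)"
    unfolding c by (simp add: tensor_smult comp_smult mult_unit_left)
  have "\<phi> \<otimes> eta = (idm A \<otimes> eta) \<cdot> \<phi>"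
    using \<phi> by (simp add: id_tensor_dom_unit_comp)
  then have "mu \<cdot> (\<phi> \<otimes> eta) = (mu \<cdot> (idm A \<otimes> eta)) \<cdot> \<phi>"
    using \<phi> by (simp add: comp_assoc)
  then have right: "mu \<cdot> (\<phi> \<otimes> twisted_window \<phi>) = smult c \<phi>"
    unfolding c using \<phi> by (simp add: tensor_smult comp_smult mult_unit_right)
  have "smult c (idm A) = smult c \<phi>"
    using mult_endo_comult_eq_window_left[OF \<phi>] mult_endo_comult_eq_window_right[OF \<phi> mult]
    unfolding left right by simp
  then have "c = 0" using smult_cancel nontrivial by metis
  then show ?thesis
    using mult_endo_comult_eq_window_left[OF \<phi>] left by (simp add: smult_zero)
qed

abbreviation A' where "A' \<equiv> Dual C A"
abbreviation ev where "ev \<equiv> Ev C A"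
abbreviation coev where "coev \<equiv> Coev C A"
abbreviation \<theta> where "\<theta> \<equiv> Twist C A"
abbreviation \<sigma> where "\<sigma> \<equiv> Braid C A A"

definition Phi1 where "Phi1 = (pairing \<otimes> idm A') \<cdot> (idm A \<otimes> coev)"
definition Phi1_inv where "Phi1_inv = (ev \<otimes> idm A) \<cdot> (idm A' \<otimes> copairing)"
definition Phi2 where "Phi2 = (idm A' \<otimes> pairing) \<cdot> (tcoev C A \<otimes> idm A)"

lemma dom_Phi1[simp]: "Dom C Phi1 = A" and cod_Phi1[simp]: "Cod C Phi1 = A'"
  and dom_Phi1_inv[simp]: "Dom C Phi1_inv = A'" and cod_Phi1_inv[simp]: "Cod C Phi1_inv = A"
  and dom_Phi2[simp]: "Dom C Phi2 = A" and cod_Phi2[simp]: "Cod C Phi2 = A'"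
  by (simp_all add: Phi1_def Phi1_inv_def Phi2_def)

lemma id_tensor_Phi1_inv_coev: "(idm A \<otimes> Phi1_inv) \<cdot> coev = copairing"
proof -
  have zz: "(idm A \<otimes> (ev \<otimes> idm A)) \<cdot> (coev \<otimes> idm (A \<odot> A)) = idm (A \<odot> A)"
    using tensor_id_comp[of "coev \<otimes> idm A" "idm A \<otimes> ev" A] by (simp add: zigzag1)
  have slide: "(idm (A \<odot> A') \<otimes> copairing) \<cdot> coev = (coev \<otimes> idm (A \<odot> A)) \<cdot> copairing"
    using id_tensor_dom_unit_comp[of copairing coev "A \<odot> A'"]
      dom_unit_tensor_id_comp[of coev copairing "A \<odot> A"] by simp
  have "(idm A \<otimes> Phi1_inv) \<cdot> coev = ((idm A \<otimes> (ev \<otimes> idm A)) \<cdot> (idm A \<otimes> (idm A' \<otimes> copairing))) \<cdot> coev"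
    unfolding Phi1_inv_def by (subst id_tensor_comp) simp_all
  also have "\<dots> = (idm A \<otimes> (ev \<otimes> idm A)) \<cdot> ((coev \<otimes> idm (A \<odot> A)) \<cdot> copairing)"
    by (subst comp_assoc[symmetric]) (simp_all add: slide)
  also have "\<dots> = copairing" by (subst comp_assoc) (simp_all add: zz)
  finally show ?thesis .
qed

lemma id_tensor_Phi1_copairing: "(idm A \<otimes> Phi1) \<cdot> copairing = coev"
proof -
  have zz: "(idm A \<otimes> (pairing \<otimes> idm A')) \<cdot> (copairing \<otimes> idm (A \<odot> A')) = idm (A \<odot> A')"
    using tensor_id_comp[of "copairing \<otimes> idm A" "idm A \<otimes> pairing" A']
    by (simp add: pairing_copairing_zigzag2)
  have slide: "(idm (A \<odot> A) \<otimes> coev) \<cdot> copairing = (copairing \<otimes> idm (A \<odot> A')) \<cdot> coev"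
    using id_tensor_dom_unit_comp[of coev copairing "A \<odot> A"]
      dom_unit_tensor_id_comp[of copairing coev "A \<odot> A'"] by simp
  have "(idm A \<otimes> Phi1) \<cdot> copairing
      = ((idm A \<otimes> (pairing \<otimes> idm A')) \<cdot> (idm A \<otimes> (idm A \<otimes> coev))) \<cdot> copairing"
    unfolding Phi1_def by (subst id_tensor_comp) simp_all
  also have "\<dots> = (idm A \<otimes> (pairing \<otimes> idm A')) \<cdot> ((copairing \<otimes> idm (A \<odot> A')) \<cdot> coev)"
    by (subst comp_assoc[symmetric]) (simp_all add: slide)
  also have "\<dots> = coev" by (subst comp_assoc) (simp_all add: zz)
  finally show ?thesis .
qed

lemma Phi1_inv_Phi1: "Phi1_inv \<cdot> Phi1 = idm A"
proof -
  have "Phi1_inv \<cdot> Phi1 = (Phi1_inv \<cdot> (pairing \<otimes> idm A')) \<cdot> (idm A \<otimes> coev)"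
    unfolding Phi1_def by (subst comp_assoc) simp_all
  also have "\<dots> = ((pairing \<otimes> idm A) \<cdot> (idm (A \<odot> A) \<otimes> Phi1_inv)) \<cdot> (idm A \<otimes> coev)"
    by (simp add: comp_cod_unit_tensor_id tensor_id_comp_id_tensor)
  also have "\<dots> = (pairing \<otimes> idm A) \<cdot> ((idm A \<otimes> (idm A \<otimes> Phi1_inv)) \<cdot> (idm A \<otimes> coev))"
    by (subst comp_assoc[symmetric]) simp_all
  also have "\<dots> = (pairing \<otimes> idm A) \<cdot> (idm A \<otimes> copairing)"
    by (subst id_tensor_comp) (simp_all add: id_tensor_Phi1_inv_coev)
  also have "\<dots> = idm A" by (rule pairing_copairing_zigzag1)
  finally show ?thesis .
qed

lemma Phi1_Phi1_inv: "Phi1 \<cdot> Phi1_inv = idm A'"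
proof -
  have "Phi1 \<cdot> Phi1_inv = (Phi1 \<cdot> (ev \<otimes> idm A)) \<cdot> (idm A' \<otimes> copairing)"
    unfolding Phi1_inv_def by (subst comp_assoc) simp_all
  also have "\<dots> = ((ev \<otimes> idm A') \<cdot> (idm (A' \<odot> A) \<otimes> Phi1)) \<cdot> (idm A' \<otimes> copairing)"
    by (simp add: comp_cod_unit_tensor_id tensor_id_comp_id_tensor)
  also have "\<dots> = (ev \<otimes> idm A') \<cdot> ((idm A' \<otimes> (idm A \<otimes> Phi1)) \<cdot> (idm A' \<otimes> copairing))"
    by (subst comp_assoc[symmetric]) simp_all
  also have "\<dots> = (ev \<otimes> idm A') \<cdot> (idm A' \<otimes> coev)"
    by (subst id_tensor_comp) (simp_all add: id_tensor_Phi1_copairing)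
  also have "\<dots> = idm A'" by (rule zigzag2)
  finally show ?thesis .
qed

lemma inverse_mor_Phi1: "inverse_mor C Phi1 = Phi1_inv"
  unfolding inverse_mor_def
proof (rule the_equality)
  fix g assume "g \<in> hom C (Cod C Phi1) (Dom C Phi1) \<and> g \<cdot> Phi1 = idm (Dom C Phi1)
    \<and> Phi1 \<cdot> g = idm (Cod C Phi1)"
  then have g: "Dom C g = A'" "Cod C g = A" "g \<cdot> Phi1 = idm A" by (auto simp: hom_def)
  have "g = g \<cdot> (Phi1 \<cdot> Phi1_inv)" using g by (simp add: Phi1_Phi1_inv)
  also have "\<dots> = Phi1_inv" using g by (subst comp_assoc) simp_all
  finally show "g = Phi1_inv" .
qed (simp add: hom_def Phi1_inv_Phi1 Phi1_Phi1_inv)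

lemma nakayama_eq: "nakayama C A mu eps = Phi1_inv \<cdot> Phi2"
  unfolding nakayama_def Let_def pairing_def[symmetric] Phi1_def[symmetric] Phi2_def[symmetric]
    inverse_mor_Phi1 ..

lemma ev_Phi1: "ev \<cdot> (Phi1 \<otimes> idm A) = pairing"
proof -
  have "ev \<cdot> (Phi1 \<otimes> idm A) = ev \<cdot> (((pairing \<otimes> idm A') \<otimes> idm A) \<cdot> ((idm A \<otimes> coev) \<otimes> idm A))"
    unfolding Phi1_def by (subst tensor_id_comp) simp_all
  also have "\<dots> = (ev \<cdot> (pairing \<otimes> idm (A' \<odot> A))) \<cdot> (idm A \<otimes> (coev \<otimes> idm A))"
    by (subst comp_assoc) simp_all
  also have "\<dots> = (pairing \<cdot> (idm (A \<odot> A) \<otimes> ev)) \<cdot> (idm A \<otimes> (coev \<otimes> idm A))"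
    by (simp add: comp_cod_unit_tensor_id comp_id_tensor_cod_unit)
  also have "\<dots> = pairing \<cdot> ((idm A \<otimes> (idm A \<otimes> ev)) \<cdot> (idm A \<otimes> (coev \<otimes> idm A)))"
    by (subst comp_assoc[symmetric]) simp_all
  also have "\<dots> = pairing" by (subst id_tensor_comp) (simp_all add: zigzag1)
  finally show ?thesis .
qed

lemma ev_Phi2: "ev \<cdot> (Phi2 \<otimes> idm A) = pairing \<cdot> ((\<theta> \<otimes> idm A) \<cdot> \<sigma>)"
proof -
  let ?T = "tcoev C A" and ?c3 = "Braid C (A \<odot> A) A"
  have split: "Phi2 \<otimes> idm A = (idm A' \<otimes> (pairing \<otimes> idm A)) \<cdot> (?T \<otimes> idm (A \<odot> A))"
    unfolding Phi2_def by (subst tensor_id_comp[symmetric]) simp_all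
  have "idm A' \<otimes> ((idm A \<otimes> pairing) \<cdot> ?c3) = (idm (A' \<odot> A) \<otimes> pairing) \<cdot> (idm A' \<otimes> ?c3)"
    using id_tensor_comp[of ?c3 "idm A \<otimes> pairing" A'] by simp
  then have braid: "idm A' \<otimes> (pairing \<otimes> idm A) = (idm (A' \<odot> A) \<otimes> pairing) \<cdot> (idm A' \<otimes> ?c3)"
    using tensor_id_eq_braid_id_tensor[of pairing A] by simp
  have ev_pairing: "ev \<cdot> (idm (A' \<odot> A) \<otimes> pairing) = pairing \<cdot> (ev \<otimes> idm (A \<odot> A))"
    by (simp add: comp_cod_unit_tensor_id comp_id_tensor_cod_unit)
  have hexagon: "(idm A' \<otimes> ?c3) \<cdot> (?T \<otimes> idm (A \<odot> A))
      = (idm A' \<otimes> (\<sigma> \<otimes> idm A)) \<cdot> ((?T \<otimes> idm (A \<odot> A)) \<cdot> \<sigma>)"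
  proof -
    have "(idm (A' \<odot> A) \<otimes> \<sigma>) \<cdot> (?T \<otimes> idm (A \<odot> A)) = (?T \<otimes> idm (A \<odot> A)) \<cdot> \<sigma>"
      by (simp add: id_tensor_comp_tensor_id dom_unit_tensor_id_comp)
    moreover have "idm A' \<otimes> ?c3 = (idm A' \<otimes> (\<sigma> \<otimes> idm A)) \<cdot> (idm (A' \<odot> A) \<otimes> \<sigma>)"
      using id_tensor_comp[of "idm A \<otimes> \<sigma>" "\<sigma> \<otimes> idm A" A'] braid_hexagon2[of A A A] by simp
    ultimately show ?thesis by (simp add: comp_assoc[symmetric])
  qed
  have twist: "((ev \<otimes> idm A) \<otimes> idm A) \<cdot> (((idm A' \<otimes> \<sigma>) \<otimes> idm A) \<cdot> ((?T \<otimes> idm A) \<otimes> idm A))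
      = \<theta> \<otimes> idm A"
    by (subst tensor_id_comp, simp, subst tensor_id_comp, simp_all add: ev_braid_tcoev)
  have "ev \<cdot> (Phi2 \<otimes> idm A)
      = (ev \<cdot> (idm (A' \<odot> A) \<otimes> pairing)) \<cdot> ((idm A' \<otimes> ?c3) \<cdot> (?T \<otimes> idm (A \<odot> A)))"
    unfolding split braid by (simp add: comp_assoc)
  also have "\<dots> = pairing \<cdot> ((ev \<otimes> idm (A \<odot> A))
      \<cdot> ((idm A' \<otimes> (\<sigma> \<otimes> idm A)) \<cdot> ((?T \<otimes> idm (A \<odot> A)) \<cdot> \<sigma>)))"
    unfolding ev_pairing hexagon by (simp add: comp_assoc)
  also have "\<dots> = pairing \<cdot> ((\<theta> \<otimes> idm A) \<cdot> \<sigma>)"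
    using twist by (simp add: comp_assoc)
  finally show ?thesis .
qed

end

locale comm_frobenius = frobenius +
  assumes commutative: "commutative_alg C A mu"
begin

abbreviation N where "N \<equiv> nakayama C A mu eps"

lemma mult_braid: "mu \<cdot> \<sigma> = mu"
  using commutative unfolding commutative_alg_def by simp

lemma twist_mult: "\<theta> \<cdot> mu = mu \<cdot> (\<theta> \<otimes> \<theta>)"
proof -
  have "\<theta> \<cdot> mu = mu \<cdot> (\<sigma> \<cdot> (\<sigma> \<cdot> (\<theta> \<otimes> \<theta>)))"
    using twist_natural[of mu] twist_tensor[of A A] by simp
  also have "\<dots> = ((mu \<cdot> \<sigma>) \<cdot> \<sigma>) \<cdot> (\<theta> \<otimes> \<theta>)" by (simp add: comp_assoc)
  also have "\<dots> = mu \<cdot> (\<theta> \<otimes> \<theta>)" by (simp add: mult_braid)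
  finally show ?thesis .
qed

lemma pairing_twist: "pairing \<cdot> (\<theta> \<otimes> \<theta>) = pairing"
proof -
  have "pairing \<cdot> (\<theta> \<otimes> \<theta>) = eps \<cdot> (\<theta> \<cdot> mu)"
    unfolding pairing_def twist_mult by (simp add: comp_assoc)
  also have "\<dots> = pairing" using twist_natural[of eps] by (simp add: pairing_def comp_assoc)
  finally show ?thesis .
qed

lemma pairing_braid: "pairing \<cdot> \<sigma> = pairing"
  unfolding pairing_def by (subst comp_assoc[symmetric]) (simp_all add: mult_braid)

lemma Phi2_twist: "Phi2 \<cdot> \<theta> = Phi1"
proof (rule mor_to_dual_eqI)
  have "ev \<cdot> ((Phi2 \<cdot> \<theta>) \<otimes> idm A) = (ev \<cdot> (Phi2 \<otimes> idm A)) \<cdot> (\<theta> \<otimes> idm A)"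
    by (subst tensor_id_comp[symmetric]) (simp_all add: comp_assoc)
  also have "\<dots> = pairing \<cdot> ((\<theta> \<otimes> idm A) \<cdot> (\<sigma> \<cdot> (\<theta> \<otimes> idm A)))"
    by (simp add: ev_Phi2 comp_assoc)
  also have "\<dots> = pairing \<cdot> (((\<theta> \<otimes> idm A) \<cdot> (idm A \<otimes> \<theta>)) \<cdot> \<sigma>)"
    using braid_natural[of \<theta> "idm A"] by (simp add: comp_assoc)
  also have "\<dots> = (pairing \<cdot> (\<theta> \<otimes> \<theta>)) \<cdot> \<sigma>"
    by (simp add: interchange comp_assoc)
  also have "\<dots> = ev \<cdot> (Phi1 \<otimes> idm A)" by (simp add: pairing_twist pairing_braid ev_Phi1)
  finally show "ev \<cdot> ((Phi2 \<cdot> \<theta>) \<otimes> idm A) = ev \<cdot> (Phi1 \<otimes> idm A)" .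
qed simp_all

lemma dom_nakayama[simp]: "Dom C N = A" and cod_nakayama[simp]: "Cod C N = A"
  by (simp_all add: nakayama_eq)

lemma nakayama_twist: "N \<cdot> \<theta> = idm A"
  unfolding nakayama_eq by (subst comp_assoc[symmetric]) (simp_all add: Phi2_twist Phi1_inv_Phi1)

lemma twist_nakayama: "\<theta> \<cdot> N = idm A"
proof -
  obtain g where g: "Dom C g = A" "Cod C g = A" "\<theta> \<cdot> g = idm A"
    using twist_iso[of A] unfolding is_iso_def hom_def by auto
  have "N = N \<cdot> (\<theta> \<cdot> g)" using g by simp
  also have "\<dots> = g" using g by (subst comp_assoc) (simp_all add: nakayama_twist)
  finally show ?thesis using g by simp
qed

lemma nakayama_mult: "N \<cdot> mu = mu \<cdot> (N \<otimes> N)"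
proof -
  have inv: "(\<theta> \<otimes> \<theta>) \<cdot> (N \<otimes> N) = idm (A \<odot> A)" by (simp add: interchange twist_nakayama)
  have "N \<cdot> mu = N \<cdot> ((mu \<cdot> (\<theta> \<otimes> \<theta>)) \<cdot> (N \<otimes> N))" by (simp add: inv comp_assoc[symmetric])
  also have "\<dots> = (N \<cdot> \<theta>) \<cdot> (mu \<cdot> (N \<otimes> N))" by (simp add: twist_mult[symmetric] comp_assoc)
  also have "\<dots> = mu \<cdot> (N \<otimes> N)" by (simp add: nakayama_twist)
  finally show ?thesis .
qed

end

theorem mainTheorem4:
  fixes C :: "('o, 'm, 'k::field) rcat"
    and A :: 'o and mu eta delta eps :: 'm
  assumes "(2::'k) \<noteq> 0"
    and "ribbon_category C"
    and "frobenius_algebra C A mu eta delta eps"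
    and "commutative_alg C A mu"
    and "delta_separable C A mu delta"
    and "special_frob C A mu eta delta eps"
    and "haploid C A"
    and "nakayama C A mu eps \<noteq> Id C A"
  shows "Comp C mu (Comp C (TensM C (nakayama C A mu eps) (Id C A)) delta) = Zero C A A"
proof -
  interpret comm_frobenius C A mu eta delta eps
    using assms(2,3,4) by unfold_locales
  show ?thesis
    using mult_endo_comult_eq_zero[OF assms(7) special_unit_nonzero[OF assms(6)]]
      nakayama_mult assms(8) by simp
qed

end
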